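(* Let $G$ be a feasible graph of diameter $D$ and election index $\phi$, and let $x\ge \phi$ be an integer given as input to all nodes. Consider the following algorithm Generic$(x)$ executed by every node $u$: in rounds $0,\dots,x-1$ each node sends its current augmented truncated view to all neighbours (so that $u$ learns $\mathcal{B}^x(u)$); then for $r=x,x+1,\dots$, in round $r$ the node sends $\mathcal{B}^r(u)$ to all neighbours and receives theirs, so that it knows $\mathcal{B}=\mathcal{B}^{r+1}(u)$, and computes $X$ = the set of views $\mathcal{B}^x(v)$ for all nodes $v$ at depth at most $r-x$ in $\mathcal{B}$ (these are determined by $\mathcal{B}$) and $Y$ = the set of views $\mathcal{B}^x(v)$ for all nodes $v$ at depth exactly $r-x+1$ in $\mathcal{B}$; it stops iterating at the first $r$ with $Y\subseteq X$. It then lets $\mathcal{B}_{min}$ be the lexicographically smallest view in $X$, lets $W$ be the set of nodes $v$ of smallest depth in $\mathcal{B}$ with $\mathcal{B}^x(v)=\mathcal{B}_{min}$, picks $w\in W$ whose sequence of port numbers from the root is lexicographically smallest, and outputs the sequence of port numbers of the shortest path from the root $u$ to $w$ in $\mathcal{B}$. Then Generic$(x)$ is a correct leader election algorithm in $G$ and works in time at most $D+x+1$.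
   Context: A graph is a simple undirected connected finite graph whose nodes have no identifiers; at each node $v$ of degree $d$ the incident edges carry distinct port numbers $0,\dots,d-1$ (local to each node). The truncated view $\mathcal{V}^0(v)$ is a single node; $\mathcal{V}^{l+1}(v)$ is the port-labelled rooted tree whose root has, for every neighbour $v_i$ of $v$, a child $x_i$ joined by an edge carrying the same two port numbers as $\{v,v_i\}$ (the one at $v$ at the root side), and $x_i$ is the root of a copy of $\mathcal{V}^l(v_i)$. The augmented truncated view $\mathcal{B}^l(v)$ is $\mathcal{V}^l(v)$ with each leaf labelled by the degree in $G$ of the node it represents; augmented truncated views are canonically coded as binary strings and ordered lexicographically by these codes. A graph is feasible if for some $l$ the views $\mathcal{B}^l(v)$ of all nodes are pairwise distinct; its election index is the smallest such $l$. Model (LOCAL): synchronous rounds numbered from 0, all nodes start simultaneously, in each round every node exchanges arbitrary messages with all neighbours and computes arbitrarily. Leader election: every node $v$ outputs a sequence $(p_1,q_1,\dots,p_k,q_k)$ of nonnegative integers describing a simple path starting at $v$ whose $i$-th edge has port $p_i$ at its endpoint closer to $v$ and $q_i$ at the other endpoint; all these paths must end at a common node. Time is the number of rounds until all nodes output. $D$ is the diameter of $G$. *)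

theory Defs
  imports Main
begin

text \<open>A graph is given by a vertex set V, a degree function deg and a port
function nbr: nbr v p is the neighbour of v reached through port p (p < deg v).\<close>

definition port_graph :: "'a set \<Rightarrow> ('a \<Rightarrow> nat) \<Rightarrow> ('a \<Rightarrow> nat \<Rightarrow> 'a) \<Rightarrow> bool" where
  "port_graph V deg nbr \<longleftrightarrow>
     finite V \<and> V \<noteq> {} \<and>
     (\<forall>v\<in>V. \<forall>p<deg v. nbr v p \<in> V \<and> nbr v p \<noteq> v) \<and>
     (\<forall>v\<in>V. inj_on (nbr v) {..<deg v}) \<and>
     (\<forall>v\<in>V. \<forall>p<deg v. \<exists>q<deg (nbr v p). nbr (nbr v p) q = v)"

definition adj :: "'a set \<Rightarrow> ('a \<Rightarrow> nat) \<Rightarrow> ('a \<Rightarrow> nat \<Rightarrow> 'a) \<Rightarrow> ('a \<times> 'a) set" where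
  "adj V deg nbr = {(v, w). v \<in> V \<and> (\<exists>p<deg v. nbr v p = w)}"

definition connected_pg :: "'a set \<Rightarrow> ('a \<Rightarrow> nat) \<Rightarrow> ('a \<Rightarrow> nat \<Rightarrow> 'a) \<Rightarrow> bool" where
  "connected_pg V deg nbr \<longleftrightarrow> (\<forall>v\<in>V. \<forall>w\<in>V. (v, w) \<in> (adj V deg nbr)\<^sup>*)"

definition rport :: "('a \<Rightarrow> nat) \<Rightarrow> ('a \<Rightarrow> nat \<Rightarrow> 'a) \<Rightarrow> 'a \<Rightarrow> nat \<Rightarrow> nat" where
  "rport deg nbr v p = (THE q. q < deg (nbr v p) \<and> nbr (nbr v p) q = v)"

definition gdist :: "'a set \<Rightarrow> ('a \<Rightarrow> nat) \<Rightarrow> ('a \<Rightarrow> nat \<Rightarrow> 'a) \<Rightarrow> 'a \<Rightarrow> 'a \<Rightarrow> nat" where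
  "gdist V deg nbr u v = (LEAST n. (u, v) \<in> (adj V deg nbr) ^^ n)"

definition diameter :: "'a set \<Rightarrow> ('a \<Rightarrow> nat) \<Rightarrow> ('a \<Rightarrow> nat \<Rightarrow> 'a) \<Rightarrow> nat" where
  "diameter V deg nbr = Max {gdist V deg nbr u v | u v. u \<in> V \<and> v \<in> V}"

text \<open>A view: a leaf labelled by a degree, or an inner node with a list of
children, each child edge labelled (port at parent side, port at child side),
ordered by the port at the parent.\<close>
datatype view = VLeaf nat | VNode "(nat \<times> nat \<times> view) list"

fun aview :: "('a \<Rightarrow> nat) \<Rightarrow> ('a \<Rightarrow> nat \<Rightarrow> 'a) \<Rightarrow> nat \<Rightarrow> 'a \<Rightarrow> view" where
  "aview deg nbr 0 v = VLeaf (deg v)"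
| "aview deg nbr (Suc l) v =
     VNode (map (\<lambda>p. (p, rport deg nbr v p, aview deg nbr l (nbr v p))) [0..<deg v])"

definition feasible :: "'a set \<Rightarrow> ('a \<Rightarrow> nat) \<Rightarrow> ('a \<Rightarrow> nat \<Rightarrow> 'a) \<Rightarrow> bool" where
  "feasible V deg nbr \<longleftrightarrow> (\<exists>l. inj_on (aview deg nbr l) V)"

definition election_index :: "'a set \<Rightarrow> ('a \<Rightarrow> nat) \<Rightarrow> ('a \<Rightarrow> nat \<Rightarrow> 'a) \<Rightarrow> nat" where
  "election_index V deg nbr = (LEAST l. inj_on (aview deg nbr l) V)"

text \<open>Lexicographic order of views, via an (injective) binary coding.\<close>
definition view_less :: "(view \<Rightarrow> bool list) \<Rightarrow> view \<Rightarrow> view \<Rightarrow> bool" where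
  "view_less code a b \<longleftrightarrow> (code a, code b) \<in> lexord {(False, True)}"

text \<open>Nodes at depth k of a view tree, with the sequence p1,q1,...,pk,qk of
port numbers on the path from the root, and the subtree rooted there.\<close>
fun at_depth :: "nat \<Rightarrow> view \<Rightarrow> (nat list \<times> view) list" where
  "at_depth 0 t = [([], t)]"
| "at_depth (Suc k) (VLeaf d) = []"
| "at_depth (Suc k) (VNode cs) =
     concat (map (\<lambda>(p, q, t). map (\<lambda>(s, t'). (p # q # s, t')) (at_depth k t)) cs)"

text \<open>Truncation of a (sufficiently deep) subtree to depth k, labelling new
leaves by their degree (= number of children in the tree).\<close>
fun trunc :: "nat \<Rightarrow> view \<Rightarrow> view" where
  "trunc 0 (VLeaf d) = VLeaf d"
| "trunc 0 (VNode cs) = VLeaf (length cs)"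
| "trunc (Suc k) (VLeaf d) = VLeaf d"
| "trunc (Suc k) (VNode cs) = VNode (map (\<lambda>(p, q, t). (p, q, trunc k t)) cs)"

definition gen_X :: "nat \<Rightarrow> nat \<Rightarrow> view \<Rightarrow> view set" where
  "gen_X x r B = {trunc x t | s t d. d \<le> r - x \<and> (s, t) \<in> set (at_depth d B)}"

definition gen_Y :: "nat \<Rightarrow> nat \<Rightarrow> view \<Rightarrow> view set" where
  "gen_Y x r B = {trunc x t | s t. (s, t) \<in> set (at_depth (r - x + 1) B)}"

definition gen_stop :: "nat \<Rightarrow> nat \<Rightarrow> view \<Rightarrow> bool" where
  "gen_stop x r B \<longleftrightarrow> gen_Y x r B \<subseteq> gen_X x r B"

definition gen_Bmin :: "(view \<Rightarrow> bool list) \<Rightarrow> nat \<Rightarrow> nat \<Rightarrow> view \<Rightarrow> view" where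
  "gen_Bmin code x r B =
     (THE b. b \<in> gen_X x r B \<and> (\<forall>c\<in>gen_X x r B. c \<noteq> b \<longrightarrow> view_less code b c))"

definition gen_output :: "(view \<Rightarrow> bool list) \<Rightarrow> nat \<Rightarrow> nat \<Rightarrow> view \<Rightarrow> nat list" where
  "gen_output code x r B =
     (let bm = gen_Bmin code x r B;
          d0 = (LEAST d. \<exists>s t. (s, t) \<in> set (at_depth d B) \<and> trunc x t = bm);
          W = {s. \<exists>t. (s, t) \<in> set (at_depth d0 B) \<and> trunc x t = bm}
      in THE s. s \<in> W \<and> (\<forall>s'\<in>W. s' \<noteq> s \<longrightarrow> (s, s') \<in> lexord {(a, b). a < b}))"

text \<open>Node u executing Generic(x): after round r (r \<ge> x) it knows
B = aview (r+1) u; it stops at the first such r with Y \<subseteq> X.\<close>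
definition gen_stop_round ::
  "('a \<Rightarrow> nat) \<Rightarrow> ('a \<Rightarrow> nat \<Rightarrow> 'a) \<Rightarrow> nat \<Rightarrow> 'a \<Rightarrow> nat" where
  "gen_stop_round deg nbr x u = (LEAST r. x \<le> r \<and> gen_stop x r (aview deg nbr (Suc r) u))"

definition generic_out ::
  "('a \<Rightarrow> nat) \<Rightarrow> ('a \<Rightarrow> nat \<Rightarrow> 'a) \<Rightarrow> (view \<Rightarrow> bool list) \<Rightarrow> nat \<Rightarrow> 'a \<Rightarrow> nat list" where
  "generic_out deg nbr code x u =
     (let r = gen_stop_round deg nbr x u in gen_output code x r (aview deg nbr (Suc r) u))"

text \<open>Number of rounds until u outputs: rounds 0..r, i.e. r+1 rounds.\<close>
definition generic_time :: "('a \<Rightarrow> nat) \<Rightarrow> ('a \<Rightarrow> nat \<Rightarrow> 'a) \<Rightarrow> nat \<Rightarrow> 'a \<Rightarrow> nat" where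
  "generic_time deg nbr x u = gen_stop_round deg nbr x u + 1"

fun follow :: "('a \<Rightarrow> nat) \<Rightarrow> ('a \<Rightarrow> nat \<Rightarrow> 'a) \<Rightarrow> 'a \<Rightarrow> nat list \<Rightarrow> 'a list option" where
  "follow deg nbr v [] = Some [v]"
| "follow deg nbr v [p] = None"
| "follow deg nbr v (p # q # s) =
     (if p < deg v \<and> rport deg nbr v p = q
      then map_option (Cons v) (follow deg nbr (nbr v p) s) else None)"

definition leader_election ::
  "'a set \<Rightarrow> ('a \<Rightarrow> nat) \<Rightarrow> ('a \<Rightarrow> nat \<Rightarrow> 'a) \<Rightarrow> ('a \<Rightarrow> nat list) \<Rightarrow> bool" where
  "leader_election V deg nbr out \<longleftrightarrow>
     (\<exists>l\<in>V. \<forall>u\<in>V. \<exists>vs. follow deg nbr u (out u) = Some vs \<and> distinct vs \<and> last vs = l)"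

end

theory Submission
  imports Defs "HOL-Library.List_Lexorder"
begin

text \<open>A node u that has stopped in round r knows the views of depth x of all nodes within
  distance r - x, and, since the views of depth x are pairwise distinct, the stopping test
  Y \<subseteq> X says exactly that the sphere of radius r - x + 1 around u adds no new node. In a
  connected graph this means that the ball of radius r - x is already the whole graph, which
  happens at the latest for r - x = D. Hence every node computes X as the set of all views of
  depth x, every node singles out the same node l whose view is lexicographically smallest, and
  the port sequence it outputs describes a shortest, hence simple, path to l.\<close>

lemma follow_Some_length:
  "follow deg nbr u s = Some vs \<Longrightarrow> length vs = Suc (length s div 2) \<and> even (length s) \<and> hd vs = u"
  by (induction deg nbr u s arbitrary: vs rule: follow.induct) (auto split: if_splits)

lemma follow_length_Suc_0_iff:
  "follow deg nbr u s = Some vs \<and> length vs = Suc 0 \<longleftrightarrow> s = [] \<and> vs = [u]"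
proof
  assume walk: "follow deg nbr u s = Some vs \<and> length vs = Suc 0"
  then have "s = []" using follow_Some_length[of deg nbr u s vs] by auto
  then show "s = [] \<and> vs = [u]" using walk by auto
qed auto

lemma follow_length_Suc_Suc_iff:
  "follow deg nbr u s = Some vs \<and> length vs = Suc (Suc d) \<longleftrightarrow>
   (\<exists>p s' vs'. p < deg u \<and> s = p # rport deg nbr u p # s' \<and> vs = u # vs' \<and>
      follow deg nbr (nbr u p) s' = Some vs' \<and> length vs' = Suc d)"
proof
  assume walk: "follow deg nbr u s = Some vs \<and> length vs = Suc (Suc d)"
  then have "length s \<ge> 2" using follow_Some_length[of deg nbr u s vs] by auto
  then obtain p q s' where "s = p # q # s'"
    by (cases s; cases "tl s") auto
  with walk show "\<exists>p s' vs'. p < deg u \<and> s = p # rport deg nbr u p # s' \<and> vs = u # vs' \<and>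
      follow deg nbr (nbr u p) s' = Some vs' \<and> length vs' = Suc d"
    by (auto split: if_splits)
qed auto

lemma follow_length_Suc_Suc_last_iff:
  "(\<exists>vs. follow deg nbr u s = Some vs \<and> length vs = Suc (Suc d) \<and> P (last vs)) \<longleftrightarrow>
   (\<exists>p s' vs'. p < deg u \<and> s = p # rport deg nbr u p # s' \<and>
      follow deg nbr (nbr u p) s' = Some vs' \<and> length vs' = Suc d \<and> P (last vs'))"
proof
  assume "\<exists>vs. follow deg nbr u s = Some vs \<and> length vs = Suc (Suc d) \<and> P (last vs)"
  then obtain vs where "follow deg nbr u s = Some vs \<and> length vs = Suc (Suc d)" and "P (last vs)"
    by blast
  moreover from this(1) obtain p s' vs' where "p < deg u" "s = p # rport deg nbr u p # s'"
    "vs = u # vs'" "follow deg nbr (nbr u p) s' = Some vs'" "length vs' = Suc d"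
    unfolding follow_length_Suc_Suc_iff by blast
  moreover from this have "last vs = last vs'" by auto
  ultimately show "\<exists>p s' vs'. p < deg u \<and> s = p # rport deg nbr u p # s' \<and>
      follow deg nbr (nbr u p) s' = Some vs' \<and> length vs' = Suc d \<and> P (last vs')"
    by auto
next
  assume "\<exists>p s' vs'. p < deg u \<and> s = p # rport deg nbr u p # s' \<and>
      follow deg nbr (nbr u p) s' = Some vs' \<and> length vs' = Suc d \<and> P (last vs')"
  then obtain p s' vs' where "p < deg u" "s = p # rport deg nbr u p # s'"
    "follow deg nbr (nbr u p) s' = Some vs'" "length vs' = Suc d" "P (last vs')"
    by blast
  then show "\<exists>vs. follow deg nbr u s = Some vs \<and> length vs = Suc (Suc d) \<and> P (last vs)"
    by (intro exI[of _ "u # vs'"]) auto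
qed

lemma trunc_aview: "k \<le> m \<Longrightarrow> trunc k (aview deg nbr m v) = aview deg nbr k v"
proof (induction k arbitrary: m v)
  case 0
  then show ?case by (cases m) auto
next
  case (Suc k)
  then show ?case by (cases m) auto
qed

lemma at_depth_aview_iff:
  "d \<le> m \<Longrightarrow> (s, t) \<in> set (at_depth d (aview deg nbr m u)) \<longleftrightarrow>
     (\<exists>vs. follow deg nbr u s = Some vs \<and> length vs = Suc d \<and> t = aview deg nbr (m - d) (last vs))"
proof (induction d arbitrary: m u s t)
  case 0
  show ?case
    unfolding conj_assoc[symmetric] follow_length_Suc_0_iff by auto
next
  case (Suc d)
  then obtain m' where m: "m = Suc m'" "d \<le> m'" by (cases m) auto
  have "(s, t) \<in> set (at_depth (Suc d) (aview deg nbr m u)) \<longleftrightarrow>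
    (\<exists>p s'. p < deg u \<and> s = p # rport deg nbr u p # s' \<and>
      (s', t) \<in> set (at_depth d (aview deg nbr m' (nbr u p))))"
    by (force simp: m)
  also have "\<dots> \<longleftrightarrow> (\<exists>p s' vs'. p < deg u \<and> s = p # rport deg nbr u p # s' \<and>
      follow deg nbr (nbr u p) s' = Some vs' \<and> length vs' = Suc d \<and>
      t = aview deg nbr (m - Suc d) (last vs'))"
    by (simp add: Suc.IH[OF m(2)] m)
  also have "\<dots> \<longleftrightarrow> (\<exists>vs. follow deg nbr u s = Some vs \<and> length vs = Suc (Suc d) \<and>
      t = aview deg nbr (m - Suc d) (last vs))"
    by (rule follow_length_Suc_Suc_last_iff[symmetric])
  finally show ?case .
qed

lemma at_depth_aview_trunc_iff:
  assumes "d + x \<le> m"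
  shows "(\<exists>t. (s, t) \<in> set (at_depth d (aview deg nbr m u)) \<and> trunc x t = b) \<longleftrightarrow>
    (\<exists>vs. follow deg nbr u s = Some vs \<and> length vs = Suc d \<and> aview deg nbr x (last vs) = b)"
proof -
  have "d \<le> m" "x \<le> m - d" using assms by simp_all
  then show ?thesis by (auto simp: at_depth_aview_iff trunc_aview)
qed

lemma inj_on_image_subset_iff:
  assumes "inj_on f C" and "A \<subseteq> C" and "B \<subseteq> C"
  shows "f ` A \<subseteq> f ` B \<longleftrightarrow> A \<subseteq> B"
proof
  assume "f ` A \<subseteq> f ` B"
  then show "A \<subseteq> B"
    using inj_on_image_mem_iff[OF assms(1) _ assms(3)] assms(2) by blast
qed (rule image_mono)

lemma inj_on_aview_mono:
  assumes "inj_on (aview deg nbr k) V" and "k \<le> m"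
  shows "inj_on (aview deg nbr m) V"
proof (rule inj_onI)
  fix v w assume "v \<in> V" "w \<in> V" "aview deg nbr m v = aview deg nbr m w"
  then have "aview deg nbr k v = aview deg nbr k w"
    using trunc_aview[OF assms(2)] by metis
  then show "v = w" using assms(1) \<open>v \<in> V\<close> \<open>w \<in> V\<close> by (auto dest: inj_onD)
qed

lemma ex_strict_min_if_finite_inj_on:
  fixes f :: "'a \<Rightarrow> 'b :: linorder"
  assumes "finite A" and "A \<noteq> {}" and "inj_on f A"
  shows "\<exists>a\<in>A. \<forall>b\<in>A. b \<noteq> a \<longrightarrow> f a < f b"
proof -
  have "Min (f ` A) \<in> f ` A" using assms(1,2) by simp
  then obtain a where "Min (f ` A) = f a" and "a \<in> A" by (rule imageE)
  moreover have "f a \<le> f b" if "b \<in> A" for b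
    using calculation(1) assms(1) that by (metis Min_le image_eqI finite_imageI)
  ultimately show ?thesis using assms(3) by (metis inj_onD order.not_eq_order_implies_strict)
qed

lemma view_less_iff: "view_less code a b \<longleftrightarrow> code a < code b"
proof -
  have less_bool: "{(u :: bool, v). u < v} = {(False, True)}" by auto
  show ?thesis unfolding view_less_def list_less_def less_bool ..
qed

lemma gen_Bmin_eqI:
  assumes "b \<in> gen_X x r B" and "\<forall>c\<in>gen_X x r B. c \<noteq> b \<longrightarrow> code b < code c"
  shows "gen_Bmin code x r B = b"
  unfolding gen_Bmin_def view_less_iff
  using assms by (intro the_equality) (auto dest: less_asym)

lemma the_lexord_least_eq_Min:
  fixes W :: "'b :: linorder list set"
  assumes "finite W" and "W \<noteq> {}"
  shows "(THE s. s \<in> W \<and> (\<forall>s'\<in>W. s' \<noteq> s \<longrightarrow> (s, s') \<in> lexord {(a, b). a < b})) = Min W"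
  unfolding list_less_def[symmetric]
proof (rule the_equality)
  show "Min W \<in> W \<and> (\<forall>s'\<in>W. s' \<noteq> Min W \<longrightarrow> Min W < s')"
    using assms by (auto simp: order.strict_iff_order)
next
  fix s assume "s \<in> W \<and> (\<forall>s'\<in>W. s' \<noteq> s \<longrightarrow> s < s')"
  then show "s = Min W"
    using assms by (metis Min_in Min_le leD)
qed

context
  fixes V :: "'a set" and deg :: "'a \<Rightarrow> nat" and nbr :: "'a \<Rightarrow> nat \<Rightarrow> 'a"
  assumes pg: "port_graph V deg nbr"
begin

abbreviation E :: "('a \<times> 'a) set" where "E \<equiv> adj V deg nbr"

lemma nbr_in_V: "v \<in> V \<Longrightarrow> p < deg v \<Longrightarrow> nbr v p \<in> V"
  using pg unfolding port_graph_def by blast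

lemma relpow_adj_in_V: "(u, v) \<in> E ^^ d \<Longrightarrow> u \<in> V \<Longrightarrow> v \<in> V"
proof (cases d)
  case (Suc d')
  assume "(u, v) \<in> E ^^ d"
  then obtain w where "(w, v) \<in> E" using Suc by (auto elim: relpow_Suc_E)
  then show "v \<in> V" by (auto simp: adj_def nbr_in_V)
qed simp

lemma relpow_adj_iff_follow:
  "u \<in> V \<Longrightarrow> (u, v) \<in> E ^^ d \<longleftrightarrow>
     (\<exists>s vs. follow deg nbr u s = Some vs \<and> length vs = Suc d \<and> last vs = v)"
proof (induction d arbitrary: u)
  case 0
  show ?case
    unfolding conj_assoc[symmetric] follow_length_Suc_0_iff by auto
next
  case (Suc d)
  have "(u, v) \<in> E ^^ Suc d \<longleftrightarrow> (\<exists>w. (u, w) \<in> E \<and> (w, v) \<in> E ^^ d)"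
    by (meson relpow_Suc_D2 relpow_Suc_I2)
  also have "\<dots> \<longleftrightarrow> (\<exists>p<deg u. (nbr u p, v) \<in> E ^^ d)"
    using Suc.prems by (auto simp: adj_def)
  also have "\<dots> \<longleftrightarrow> (\<exists>p s' vs'. p < deg u \<and> follow deg nbr (nbr u p) s' = Some vs' \<and>
      length vs' = Suc d \<and> last vs' = v)"
    using Suc.IH nbr_in_V[OF Suc.prems] by blast
  also have "\<dots> \<longleftrightarrow> (\<exists>s vs. follow deg nbr u s = Some vs \<and> length vs = Suc (Suc d) \<and> last vs = v)"
    unfolding follow_length_Suc_Suc_last_iff[where P = "\<lambda>w. w = v"] by blast
  finally show ?case .
qed

lemma follow_nth_relpow:
  "follow deg nbr u s = Some vs \<Longrightarrow> u \<in> V \<Longrightarrow> i < length vs \<Longrightarrow>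
   (u, vs ! i) \<in> E ^^ i \<and> (vs ! i, last vs) \<in> E ^^ (length vs - 1 - i)"
proof (induction s arbitrary: u vs i rule: induct_list012)
  case (3 p q s)
  from "3.prems" obtain vs' where p: "p < deg u" and "q = rport deg nbr u p"
    and walk: "follow deg nbr (nbr u p) s = Some vs'" and vs: "vs = u # vs'"
    by (auto split: if_splits)
  have nbr: "nbr u p \<in> V" using nbr_in_V "3.prems" p by auto
  have edge: "(u, nbr u p) \<in> E" using "3.prems" p by (auto simp: adj_def)
  have vs': "vs' \<noteq> []" "hd vs' = nbr u p" using follow_Some_length[OF walk] by auto
  show ?case
  proof (cases i)
    case 0
    have "(nbr u p, last vs') \<in> E ^^ (length vs' - 1)"
      using "3.IH"(1)[OF walk nbr, of 0] vs' by (auto simp: hd_conv_nth)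
    then have "(u, last vs') \<in> E ^^ Suc (length vs' - 1)"
      using relpow_Suc_I2[OF edge] by simp
    then show ?thesis using 0 vs vs' by auto
  next
    case (Suc j)
    then have "j < length vs'" using "3.prems" vs by auto
    from "3.IH"(1)[OF walk nbr this] have "(nbr u p, vs' ! j) \<in> E ^^ j"
      and "(vs' ! j, last vs') \<in> E ^^ (length vs' - 1 - j)" by auto
    then show ?thesis using relpow_Suc_I2[OF edge] Suc vs vs' by auto
  qed
qed auto

lemma follow_distinct_if_shortest:
  assumes walk: "follow deg nbr u s = Some vs" and "u \<in> V"
    and shortest: "\<And>d. d < length vs - 1 \<Longrightarrow> (u, last vs) \<notin> E ^^ d"
  shows "distinct vs"
proof (rule ccontr)
  assume "\<not> distinct vs"
  then obtain i j where ij: "i < j" "j < length vs" "vs ! i = vs ! j"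
    unfolding distinct_conv_nth by (metis linorder_neqE_nat)
  have "(u, vs ! j) \<in> E ^^ i" and "(vs ! j, last vs) \<in> E ^^ (length vs - 1 - j)"
    using follow_nth_relpow[OF walk \<open>u \<in> V\<close>, of i] follow_nth_relpow[OF walk \<open>u \<in> V\<close>, of j] ij
    by auto
  then have "(u, last vs) \<in> E ^^ (i + (length vs - 1 - j))"
    unfolding relpow_add by blast
  then show False using shortest ij by auto
qed

lemma trunc_at_depth_aview_eq_image:
  assumes "u \<in> V" and "d + x \<le> m"
  shows "{trunc x t | s t. (s, t) \<in> set (at_depth d (aview deg nbr m u))} =
    aview deg nbr x ` {v. (u, v) \<in> E ^^ d}"
proof (rule set_eqI)
  fix b
  have "b \<in> {trunc x t | s t. (s, t) \<in> set (at_depth d (aview deg nbr m u))} \<longleftrightarrow>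
      (\<exists>s. \<exists>t. (s, t) \<in> set (at_depth d (aview deg nbr m u)) \<and> trunc x t = b)"
    by blast
  also have "\<dots> \<longleftrightarrow>
      (\<exists>s vs. follow deg nbr u s = Some vs \<and> length vs = Suc d \<and> aview deg nbr x (last vs) = b)"
    unfolding at_depth_aview_trunc_iff[OF assms(2)] ..
  also have "\<dots> \<longleftrightarrow> b \<in> aview deg nbr x ` {v. (u, v) \<in> E ^^ d}"
    unfolding relpow_adj_iff_follow[OF assms(1)] by blast
  finally show "b \<in> {trunc x t | s t. (s, t) \<in> set (at_depth d (aview deg nbr m u))} \<longleftrightarrow>
      b \<in> aview deg nbr x ` {v. (u, v) \<in> E ^^ d}" .
qed

lemma gen_X_aview:
  assumes "u \<in> V" and "x \<le> r"
  shows "gen_X x r (aview deg nbr (Suc r) u) = aview deg nbr x ` {v. \<exists>d\<le>r - x. (u, v) \<in> E ^^ d}"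
proof -
  have "gen_X x r (aview deg nbr (Suc r) u) =
      (\<Union>d\<le>r - x. {trunc x t | s t. (s, t) \<in> set (at_depth d (aview deg nbr (Suc r) u))})"
    unfolding gen_X_def by blast
  also have "\<dots> = (\<Union>d\<le>r - x. aview deg nbr x ` {v. (u, v) \<in> E ^^ d})"
    by (rule SUP_cong[OF refl], rule trunc_at_depth_aview_eq_image[OF assms(1)]) (use assms(2) in auto)
  finally show ?thesis by blast
qed

lemma gen_Y_aview:
  assumes "u \<in> V" and "x \<le> r"
  shows "gen_Y x r (aview deg nbr (Suc r) u) = aview deg nbr x ` {v. (u, v) \<in> E ^^ Suc (r - x)}"
  unfolding gen_Y_def Suc_eq_plus1[symmetric]
  by (rule trunc_at_depth_aview_eq_image[OF assms(1)]) (use assms(2) in simp)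

context
  assumes con: "connected_pg V deg nbr"
begin

lemma connected_relpow: "u \<in> V \<Longrightarrow> v \<in> V \<Longrightarrow> \<exists>n. (u, v) \<in> E ^^ n"
  using con unfolding connected_pg_def by (blast dest: rtrancl_imp_relpow)

lemma relpow_adj_within_diameter:
  assumes "u \<in> V" and "v \<in> V"
  shows "\<exists>d\<le>diameter V deg nbr. (u, v) \<in> E ^^ d"
proof (intro exI conjI)
  show "(u, v) \<in> E ^^ gdist V deg nbr u v"
    unfolding gdist_def using connected_relpow[OF assms] by (rule LeastI_ex)
  have "finite V" using pg unfolding port_graph_def by simp
  moreover have "{gdist V deg nbr u v | u v. u \<in> V \<and> v \<in> V} =
      (\<lambda>(u, v). gdist V deg nbr u v) ` (V \<times> V)"
    by auto
  ultimately have "finite {gdist V deg nbr u v | u v. u \<in> V \<and> v \<in> V}"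
    by simp
  then show "gdist V deg nbr u v \<le> diameter V deg nbr"
    unfolding diameter_def using assms by (intro Max_ge) auto
qed

lemma V_subset_ball_if_sphere_subset:
  assumes "u \<in> V" and closed: "{v. (u, v) \<in> E ^^ Suc k} \<subseteq> {v. \<exists>d\<le>k. (u, v) \<in> E ^^ d}"
  shows "V \<subseteq> {v. \<exists>d\<le>k. (u, v) \<in> E ^^ d}"
proof -
  have "\<exists>d\<le>k. (u, v) \<in> E ^^ d" if "(u, v) \<in> E ^^ n" for n v
    using that
  proof (induction n arbitrary: v)
    case (Suc n)
    then obtain w where "(u, w) \<in> E ^^ n" and edge: "(w, v) \<in> E"
      by (auto elim: relpow_Suc_E)
    then obtain d where "d \<le> k" and "(u, w) \<in> E ^^ d" using Suc.IH by blast
    moreover have "(u, v) \<in> E ^^ Suc d" using relpow_Suc_I[OF _ edge] calculation(2) .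
    moreover consider "d = k" | "Suc d \<le> k" using calculation(1) by linarith
    ultimately show ?case using closed by cases blast+
  qed auto
  then show ?thesis using connected_relpow[OF assms(1)] by blast
qed

end

context
  fixes x :: nat
  assumes inj_aview: "inj_on (aview deg nbr x) V"
begin

lemma gen_stop_aview_iff:
  assumes "u \<in> V" and "x \<le> r"
  shows "gen_stop x r (aview deg nbr (Suc r) u) \<longleftrightarrow>
    {v. (u, v) \<in> E ^^ Suc (r - x)} \<subseteq> {v. \<exists>d\<le>r - x. (u, v) \<in> E ^^ d}"
proof -
  have "{v. (u, v) \<in> E ^^ Suc (r - x)} \<subseteq> V" and "{v. \<exists>d\<le>r - x. (u, v) \<in> E ^^ d} \<subseteq> V"
    using relpow_adj_in_V assms(1) by blast+
  then show ?thesis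
    unfolding gen_stop_def gen_X_aview[OF assms] gen_Y_aview[OF assms]
    by (rule inj_on_image_subset_iff[OF inj_aview])
qed

lemma at_depth_aview_trunc_eq_aview_iff:
  assumes "u \<in> V" and "l \<in> V" and "d + x \<le> m"
  shows "(\<exists>t. (s, t) \<in> set (at_depth d (aview deg nbr m u)) \<and> trunc x t = aview deg nbr x l) \<longleftrightarrow>
    (\<exists>vs. follow deg nbr u s = Some vs \<and> length vs = Suc d \<and> last vs = l)"
proof -
  have "aview deg nbr x (last vs) = aview deg nbr x l \<longleftrightarrow> last vs = l"
    if "follow deg nbr u s = Some vs" and "length vs = Suc d" for vs
  proof -
    have "(u, last vs) \<in> E ^^ d"
      using that relpow_adj_iff_follow[OF assms(1)] by blast
    then have "last vs \<in> V" using relpow_adj_in_V assms(1) by blast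
    then show ?thesis using inj_aview assms(2) by (auto dest: inj_onD)
  qed
  then show ?thesis unfolding at_depth_aview_trunc_iff[OF assms(3)] by blast
qed

lemma least_depth_aview_shortest:
  assumes "u \<in> V" and "l \<in> V" and "x \<le> r"
    and "(u, l) \<in> E ^^ d1" and "d1 \<le> r - x"
  defines "d0 \<equiv> LEAST d. \<exists>s t. (s, t) \<in> set (at_depth d (aview deg nbr (Suc r) u)) \<and>
      trunc x t = aview deg nbr x l"
  shows "d0 \<le> r - x" and "(u, l) \<in> E ^^ d0" and "\<And>d. d < d0 \<Longrightarrow> (u, l) \<notin> E ^^ d"
proof -
  define P where "P d \<longleftrightarrow> (\<exists>s t. (s, t) \<in> set (at_depth d (aview deg nbr (Suc r) u)) \<and>
      trunc x t = aview deg nbr x l)" for d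
  have P_iff: "P d \<longleftrightarrow> (u, l) \<in> E ^^ d" if "d \<le> r - x" for d
  proof -
    have "d + x \<le> Suc r" using that assms(3) by simp
    show ?thesis
      unfolding P_def relpow_adj_iff_follow[OF assms(1)]
        at_depth_aview_trunc_eq_aview_iff[OF assms(1,2) \<open>d + x \<le> Suc r\<close>] ..
  qed
  have d0_def': "d0 = (LEAST d. P d)" unfolding d0_def P_def ..
  have "P d1" using P_iff assms(4,5) by blast
  then have "d0 \<le> d1" and "P d0" unfolding d0_def' by (auto intro: Least_le LeastI)
  then show "d0 \<le> r - x" and "(u, l) \<in> E ^^ d0" using P_iff assms(5) by auto
  show "(u, l) \<notin> E ^^ d" if "d < d0" for d
    using not_less_Least[of d P] P_iff[of d] that \<open>d0 \<le> r - x\<close> unfolding d0_def' by auto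
qed

lemma gen_output_aview:
  assumes "u \<in> V" and "l \<in> V" and "x \<le> r"
    and Bmin: "gen_Bmin code x r (aview deg nbr (Suc r) u) = aview deg nbr x l"
    and "(u, l) \<in> E ^^ d1" and "d1 \<le> r - x"
  shows "\<exists>vs. follow deg nbr u (gen_output code x r (aview deg nbr (Suc r) u)) = Some vs \<and>
    distinct vs \<and> last vs = l"
proof -
  define B where "B = aview deg nbr (Suc r) u"
  define d0 where "d0 = (LEAST d. \<exists>s t. (s, t) \<in> set (at_depth d B) \<and> trunc x t = aview deg nbr x l)"
  note d0 = least_depth_aview_shortest[OF assms(1,2,3,5,6), folded B_def, folded d0_def]
  define W where "W = {s. \<exists>t. (s, t) \<in> set (at_depth d0 B) \<and> trunc x t = aview deg nbr x l}"
  have "d0 + x \<le> Suc r" using d0(1) assms(3) by simp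
  have W_eq: "W = {s. \<exists>vs. follow deg nbr u s = Some vs \<and> length vs = Suc d0 \<and> last vs = l}"
    unfolding W_def B_def at_depth_aview_trunc_eq_aview_iff[OF assms(1,2) \<open>d0 + x \<le> Suc r\<close>] ..
  have "finite W" unfolding W_def
    by (rule finite_subset[of _ "fst ` set (at_depth d0 B)"]) force+
  moreover have "W \<noteq> {}" using W_eq d0(2) relpow_adj_iff_follow[OF assms(1)] by blast
  ultimately have "Min W \<in> W" by simp
  then obtain vs where vs: "follow deg nbr u (Min W) = Some vs" "length vs = Suc d0" "last vs = l"
    using W_eq by blast
  have "gen_output code x r B =
      (THE s. s \<in> W \<and> (\<forall>s'\<in>W. s' \<noteq> s \<longrightarrow> (s, s') \<in> lexord {(a, b). a < b}))"
    unfolding gen_output_def Let_def Bmin[folded B_def] d0_def[symmetric] W_def ..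
  also have "\<dots> = Min W"
    using \<open>finite W\<close> \<open>W \<noteq> {}\<close> by (rule the_lexord_least_eq_Min)
  finally have "gen_output code x r B = Min W" .
  moreover have "distinct vs"
    using follow_distinct_if_shortest[OF vs(1) assms(1)] d0(3) vs(2,3) by simp
  ultimately show ?thesis using vs unfolding B_def by auto
qed

context
  assumes con: "connected_pg V deg nbr"
begin

lemma gen_stop_round_bounds:
  assumes "u \<in> V"
  shows "x \<le> gen_stop_round deg nbr x u"
    and "gen_stop x (gen_stop_round deg nbr x u) (aview deg nbr (Suc (gen_stop_round deg nbr x u)) u)"
    and "gen_stop_round deg nbr x u \<le> x + diameter V deg nbr"
proof -
  let ?D = "diameter V deg nbr"
  let ?stops = "\<lambda>r. x \<le> r \<and> gen_stop x r (aview deg nbr (Suc r) u)"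
  have "{v. (u, v) \<in> E ^^ Suc ?D} \<subseteq> {v. \<exists>d\<le>?D. (u, v) \<in> E ^^ d}"
    using relpow_adj_in_V relpow_adj_within_diameter[OF con assms] assms by blast
  then have witness: "?stops (x + ?D)"
    using gen_stop_aview_iff[OF assms, of "x + ?D"] by simp
  show "x \<le> gen_stop_round deg nbr x u"
    and "gen_stop x (gen_stop_round deg nbr x u) (aview deg nbr (Suc (gen_stop_round deg nbr x u)) u)"
    using LeastI[of ?stops, OF witness] unfolding gen_stop_round_def by blast+
  show "gen_stop_round deg nbr x u \<le> x + ?D"
    using Least_le[of ?stops, OF witness] unfolding gen_stop_round_def .
qed

lemma generic_out_leads_to_min:
  assumes "u \<in> V" and "l \<in> V"
    and l_min: "\<forall>v\<in>V. v \<noteq> l \<longrightarrow> code (aview deg nbr x l) < code (aview deg nbr x v)"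
  shows "\<exists>vs. follow deg nbr u (generic_out deg nbr code x u) = Some vs \<and> distinct vs \<and> last vs = l"
proof -
  define r where "r = gen_stop_round deg nbr x u"
  have "x \<le> r" and "gen_stop x r (aview deg nbr (Suc r) u)"
    using gen_stop_round_bounds[OF assms(1)] unfolding r_def by auto
  then have "V \<subseteq> {v. \<exists>d\<le>r - x. (u, v) \<in> E ^^ d}"
    using gen_stop_aview_iff[OF assms(1)] V_subset_ball_if_sphere_subset[OF con assms(1)] by blast
  moreover have "{v. \<exists>d\<le>r - x. (u, v) \<in> E ^^ d} \<subseteq> V"
    using relpow_adj_in_V assms(1) by blast
  ultimately have ball: "{v. \<exists>d\<le>r - x. (u, v) \<in> E ^^ d} = V" by blast
  have X: "gen_X x r (aview deg nbr (Suc r) u) = aview deg nbr x ` V"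
    unfolding gen_X_aview[OF assms(1) \<open>x \<le> r\<close>] ball ..
  have "aview deg nbr x l \<in> gen_X x r (aview deg nbr (Suc r) u)"
    unfolding X using assms(2) by blast
  moreover have "\<forall>c\<in>gen_X x r (aview deg nbr (Suc r) u). c \<noteq> aview deg nbr x l \<longrightarrow>
      code (aview deg nbr x l) < code c"
    unfolding X using l_min by auto
  ultimately have "gen_Bmin code x r (aview deg nbr (Suc r) u) = aview deg nbr x l"
    by (rule gen_Bmin_eqI)
  moreover obtain d1 where "d1 \<le> r - x" "(u, l) \<in> E ^^ d1" using ball assms(2) by blast
  ultimately show ?thesis
    unfolding generic_out_def Let_def r_def[symmetric]
    using gen_output_aview[OF assms(1,2) \<open>x \<le> r\<close>] by blast
qed

end

end

end

theorem lemma1: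
  fixes V :: "'a set" and deg :: "'a \<Rightarrow> nat" and nbr :: "'a \<Rightarrow> nat \<Rightarrow> 'a"
    and code :: "view \<Rightarrow> bool list" and x :: nat
  assumes "port_graph V deg nbr"
    and "connected_pg V deg nbr"
    and "feasible V deg nbr"
    and "inj code"
    and "x \<ge> election_index V deg nbr"
  shows "(\<forall>u\<in>V. \<exists>r. x \<le> r \<and> gen_stop x r (aview deg nbr (Suc r) u))
       \<and> leader_election V deg nbr (generic_out deg nbr code x)
       \<and> (\<forall>u\<in>V. generic_time deg nbr x u \<le> diameter V deg nbr + x + 1)"
proof -
  have "inj_on (aview deg nbr (election_index V deg nbr)) V"
    using assms(3) unfolding feasible_def election_index_def by (rule LeastI_ex)
  then have inj_x: "inj_on (aview deg nbr x) V" using assms(5) by (rule inj_on_aview_mono)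
  then have "inj_on (code \<circ> aview deg nbr x) V"
    using assms(4) by (simp add: comp_inj_on inj_on_subset)
  moreover have "finite V" and "V \<noteq> {}" using assms(1) unfolding port_graph_def by auto
  ultimately obtain l where "l \<in> V"
    and l_min: "\<forall>v\<in>V. v \<noteq> l \<longrightarrow> code (aview deg nbr x l) < code (aview deg nbr x v)"
    using ex_strict_min_if_finite_inj_on[of V "code \<circ> aview deg nbr x"] by auto
  note stop = gen_stop_round_bounds[OF assms(1) inj_x assms(2)]
  have "\<forall>u\<in>V. \<exists>r. x \<le> r \<and> gen_stop x r (aview deg nbr (Suc r) u)"
    using stop(1,2) by blast
  moreover have "leader_election V deg nbr (generic_out deg nbr code x)"
    unfolding leader_election_def
    using generic_out_leads_to_min[OF assms(1) inj_x assms(2) _ \<open>l \<in> V\<close> l_min] \<open>l \<in> V\<close> by blast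
  moreover have "\<forall>u\<in>V. generic_time deg nbr x u \<le> diameter V deg nbr + x + 1"
    unfolding generic_time_def using stop(3) by fastforce
  ultimately show ?thesis by blast
qed

end
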